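(* Let $A_1,A_2\in\mathbf{C}^{n\times n}$ and define $\Phi_1(t),\Phi_2(t)\in\mathbf{C}^{n\times n}$ by $$\begin{bmatrix}\Phi_1(t)\\ \Phi_2(t)\end{bmatrix}=\mathrm{e}^{t\{A_1,A_2\}_\diamond}\begin{bmatrix}I_n\\ 0_{n\times n}\end{bmatrix}\ (t\in\mathbf{R}),\qquad \begin{bmatrix}\Phi_1(t)\\ \Phi_2(t)\end{bmatrix}=\left(\{A_1,A_2\}_\diamond\right)^t\begin{bmatrix}I_n\\ 0_{n\times n}\end{bmatrix}\ (t\in\mathbf{Z}),$$ where in the case $t\in\mathbf{Z}$, $t<0$, the bimatrix $\{A_1,A_2\}$ is assumed nonsingular. Then $\{\Phi_1(t),\Phi_2(t)\}=\mathrm{e}^{t\{A_1,A_2\}}$ for $t\in\mathbf{R}$, and $\{\Phi_1(t),\Phi_2(t)\}=\{A_1,A_2\}^t$ for $t\in\mathbf{Z}$.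
   Context: $P^{\#}$ denotes entrywise conjugate. For $A_1,A_2\in\mathbf{C}^{n\times n}$ the bimatrix $\{A_1,A_2\}$ is the real-linear map $\mathbf{C}^n\to\mathbf{C}^n$, $x\mapsto A_1x+A_2^{\#}x^{\#}$; sums are pointwise, products are compositions, $\mathcal{I}_n=\{I_n,0\}$ is the identity, and equality means equality as maps. Powers: $\{A_1,A_2\}^0=\mathcal{I}_n$, $\{A_1,A_2\}^i=\{A_1,A_2\}\{A_1,A_2\}^{i-1}$ for $i\geq1$; if $\{A_1,A_2\}$ is nonsingular (has a two-sided inverse bimatrix), $\{A_1,A_2\}^{-i}$ is the $i$-th power of the inverse. Exponent: $\mathrm{e}^{t\{A_1,A_2\}}=\sum_{i=0}^\infty \frac{t^i}{i!}\{A_1,A_2\}^i$ (applied pointwise to $x$, convergent), $t\in\mathbf{R}$. Complex lifting: $\{A_1,A_2\}_\diamond=\begin{bmatrix}A_1 & A_2^{\#}\\ A_2 & A_1^{\#}\end{bmatrix}$. *)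

theory Defs
  imports "HOL-Analysis.Analysis"
begin

definition vconj :: "complex^'n \<Rightarrow> complex^'n" where
  "vconj x = (\<chi> i. cnj (x $ i))"

definition mconj :: "complex^'n^'m \<Rightarrow> complex^'n^'m" where
  "mconj A = (\<chi> i j. cnj (A $ i $ j))"

text \<open>The bimatrix {A1,A2} as a real-linear map x \<mapsto> A1 x + conj(A2) conj(x).\<close>
definition bimat :: "complex^'n^'n \<Rightarrow> complex^'n^'n \<Rightarrow> complex^'n \<Rightarrow> complex^'n" where
  "bimat A1 A2 = (\<lambda>x. A1 *v x + mconj A2 *v vconj x)"

definition bimat_nonsingular :: "complex^'n^'n \<Rightarrow> complex^'n^'n \<Rightarrow> bool" where
  "bimat_nonsingular A1 A2 \<longleftrightarrow>
     (\<exists>B1 B2. bimat A1 A2 \<circ> bimat B1 B2 = id \<and> bimat B1 B2 \<circ> bimat A1 A2 = id)"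

definition bimat_pow_int :: "complex^'n^'n \<Rightarrow> complex^'n^'n \<Rightarrow> int \<Rightarrow> complex^'n \<Rightarrow> complex^'n" where
  "bimat_pow_int A1 A2 t =
     (if t \<ge> 0 then bimat A1 A2 ^^ nat t
      else (let B = (SOME B. bimat A1 A2 \<circ> bimat (fst B) (snd B) = id \<and>
                               bimat (fst B) (snd B) \<circ> bimat A1 A2 = id)
            in bimat (fst B) (snd B) ^^ nat (- t)))"

definition bimat_exp :: "real \<Rightarrow> complex^'n^'n \<Rightarrow> complex^'n^'n \<Rightarrow> complex^'n \<Rightarrow> complex^'n" where
  "bimat_exp t A1 A2 = (\<lambda>x. \<Sum>i. (t ^ i / fact i) *\<^sub>R ((bimat A1 A2 ^^ i) x))"

definition lift :: "complex^'n^'n \<Rightarrow> complex^'n^'n \<Rightarrow> complex^('n+'n)^('n+'n)" where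
  "lift A1 A2 = (\<chi> i j. case (i, j) of
      (Inl a, Inl b) \<Rightarrow> A1 $ a $ b
    | (Inl a, Inr b) \<Rightarrow> cnj (A2 $ a $ b)
    | (Inr a, Inl b) \<Rightarrow> A2 $ a $ b
    | (Inr a, Inr b) \<Rightarrow> cnj (A1 $ a $ b))"

primrec matpow :: "complex^'m^'m \<Rightarrow> nat \<Rightarrow> complex^'m^'m" where
  "matpow M 0 = mat 1"
| "matpow M (Suc k) = M ** matpow M k"

definition matpow_int :: "complex^'m^'m \<Rightarrow> int \<Rightarrow> complex^'m^'m" where
  "matpow_int M t = (if t \<ge> 0 then matpow M (nat t) else matpow (matrix_inv M) (nat (- t)))"

definition mat_exp :: "real \<Rightarrow> complex^'m^'m \<Rightarrow> complex^'m^'m" where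
  "mat_exp t M = (\<Sum>i. (t ^ i / fact i) *\<^sub>R matpow M i)"

definition E0 :: "complex^'n^('n+'n)" where
  "E0 = (\<chi> i j. case i of Inl a \<Rightarrow> (if a = j then 1 else 0) | Inr a \<Rightarrow> 0)"

definition top_block :: "complex^'n^('n+'n) \<Rightarrow> complex^'n^'n" where
  "top_block P = (\<chi> i j. P $ Inl i $ j)"

definition bot_block :: "complex^'n^('n+'n) \<Rightarrow> complex^'n^'n" where
  "bot_block P = (\<chi> i j. P $ Inr i $ j)"

end

theory Submission
  imports Defs
begin

text \<open>The lifting \<open>{A\<^sub>1,A\<^sub>2}\<^sub>\<diamond>\<close> is the complex matrix by which the real-linear map
\<open>{A\<^sub>1,A\<^sub>2}\<close> acts on \<open>[x; conj x]\<close>. Consequently the lifting is multiplicative, and left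
multiplication by it composes the bimatrix formed by the two blocks of a \<open>2n \<times> n\<close> matrix with
\<open>{A\<^sub>1,A\<^sub>2}\<close>; starting from \<open>[I; 0]\<close>, whose blocks give the identity, this yields the
nonnegative powers. A bimatrix determines its two matrices, so the lifting of the inverse
bimatrix is the inverse matrix, which gives the negative powers. For the exponential, the map
\<open>Q \<mapsto> {blocks of Q [I; 0]} x\<close> is real-linear and bounded, hence commutes with the convergent
exponential series.\<close>

lemma sum_UNIV_Plus:
  "sum f (UNIV::('a::finite + 'b::finite) set) = (\<Sum>a\<in>UNIV. f (Inl a)) + (\<Sum>b\<in>UNIV. f (Inr b))"
  using sum.Plus[of "UNIV::'a set" "UNIV::'b set" f]
  by (simp only: UNIV_Plus_UNIV finite comp_def simp_thms)

lemma matrix_add_rdistrib: "(A + B) ** C = A ** C + B ** (C::'a::semiring_1^_^_)"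
  by (simp add: matrix_matrix_mult_def vec_eq_iff sum.distrib distrib_right)

lemma scaleR_matrix_vector_mult: "(r *\<^sub>R (A::complex^'n^'m)) *v x = r *\<^sub>R (A *v x)"
  by (simp add: matrix_vector_mult_def vec_eq_iff scaleR_sum_right)

lemma matrix_inv_eqI:
  fixes A :: "'a::semiring_1^'n^'n"
  assumes "A ** B = mat 1" "B ** A = mat 1"
  shows "matrix_inv A = B"
proof -
  have "A ** matrix_inv A = mat 1 \<and> matrix_inv A ** A = mat 1"
    unfolding matrix_inv_def by (rule someI[of _ B]) (use assms in simp)
  then have "matrix_inv A = matrix_inv A ** (A ** B)" "matrix_inv A ** A = mat 1"
    using assms(1) by auto
  then show ?thesis by (simp add: matrix_mul_assoc)
qed

lemma norm_funpow_le_onorm_power: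
  fixes L :: "'a::real_normed_vector \<Rightarrow> 'a"
  assumes "bounded_linear L"
  shows "norm ((L ^^ k) x) \<le> onorm L ^ k * norm x"
proof (induction k)
  case (Suc k)
  have "norm (L ((L ^^ k) x)) \<le> onorm L * norm ((L ^^ k) x)"
    by (rule onorm[OF assms])
  also have "\<dots> \<le> onorm L * (onorm L ^ k * norm x)"
    by (intro mult_left_mono Suc onorm_pos_le assms)
  finally show ?case by (simp add: mult.assoc)
qed simp

lemma summable_exp_series_funpow:
  fixes L :: "'a::banach \<Rightarrow> 'a"
  assumes "bounded_linear L"
  shows "summable (\<lambda>i. (t ^ i / fact i) *\<^sub>R (L ^^ i) x)"
proof (rule summable_comparison_test)
  show "summable (\<lambda>i. (inverse (fact i) * (\<bar>t\<bar> * onorm L) ^ i) * norm x)"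
    by (intro summable_mult2 summable_exp)
  have "norm ((t ^ i / fact i) *\<^sub>R (L ^^ i) x) \<le> (inverse (fact i) * (\<bar>t\<bar> * onorm L) ^ i) * norm x"
    for i
  proof -
    have "norm ((t ^ i / fact i) *\<^sub>R (L ^^ i) x) = (\<bar>t\<bar> ^ i / fact i) * norm ((L ^^ i) x)"
      by (simp add: power_abs)
    also have "\<dots> \<le> (\<bar>t\<bar> ^ i / fact i) * (onorm L ^ i * norm x)"
      by (intro mult_left_mono norm_funpow_le_onorm_power assms) simp
    finally show ?thesis by (simp add: power_mult_distrib field_simps)
  qed
  then show "\<exists>N. \<forall>i\<ge>N. norm ((t ^ i / fact i) *\<^sub>R (L ^^ i) x) \<le> (inverse (fact i) * (\<bar>t\<bar> * onorm L) ^ i) * norm x"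
    by blast
qed

lemma matpow_eq_funpow: "matpow M k = ((\<lambda>Q. M ** Q) ^^ k) (mat 1)"
  by (induction k) simp_all

lemma summable_mat_exp_series: "summable (\<lambda>i. (t ^ i / fact i) *\<^sub>R matpow (M::complex^'m^'m) i)"
proof -
  have "linear (\<lambda>Q::complex^'m^'m. M ** Q)"
    by (rule linearI) (simp_all add: matrix_add_ldistrib matrix_scalar_ac scalar_matrix_assoc)
  then have "bounded_linear (\<lambda>Q::complex^'m^'m. M ** Q)"
    by (simp add: linear_conv_bounded_linear)
  then show ?thesis
    unfolding matpow_eq_funpow by (rule summable_exp_series_funpow)
qed

lemma mconj_mult: "mconj (A ** B) = mconj A ** mconj B"
  by (simp add: mconj_def matrix_matrix_mult_def vec_eq_iff)

lemma mconj_add: "mconj (A + B) = mconj A + mconj B"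
  by (simp add: mconj_def vec_eq_iff)

lemma mconj_scaleR: "mconj (r *\<^sub>R A) = r *\<^sub>R mconj A"
  by (simp add: mconj_def vec_eq_iff)

lemma mconj_mconj [simp]: "mconj (mconj A) = A"
  by (simp add: mconj_def vec_eq_iff)

lemma vconj_vconj [simp]: "vconj (vconj x) = x"
  by (simp add: vconj_def vec_eq_iff)

lemma vconj_add: "vconj (x + y) = vconj x + vconj y"
  by (simp add: vconj_def vec_eq_iff)

lemma vconj_matrix_vector_mult: "vconj (A *v x) = mconj A *v vconj x"
  by (simp add: vconj_def mconj_def matrix_vector_mult_def vec_eq_iff)

lemma bimat_mat1_0: "bimat (mat 1) 0 = id"
  by (rule ext) (simp add: bimat_def mconj_def zero_vec_def[symmetric])

lemma bimat_add: "bimat (C1 + D1) (C2 + D2) x = bimat C1 C2 x + bimat D1 D2 x"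
  by (simp add: bimat_def mconj_add matrix_vector_mult_add_rdistrib)

lemma bimat_scaleR: "bimat (r *\<^sub>R C1) (r *\<^sub>R C2) x = r *\<^sub>R bimat C1 C2 x"
  by (simp add: bimat_def mconj_scaleR scaleR_matrix_vector_mult scaleR_add_right)

lemma bimat_comp_bimat:
  "bimat A1 A2 \<circ> bimat B1 B2 = bimat (A1 ** B1 + mconj A2 ** B2) (A2 ** B1 + mconj A1 ** B2)"
  by (rule ext) (simp add: bimat_def mconj_add mconj_mult vconj_add vconj_matrix_vector_mult
      algebra_simps matrix_vector_mul_assoc)

lemma bimat_axis_component:
  "bimat C1 C2 (axis j c) $ i = C1 $ i $ j * c + cnj (C2 $ i $ j) * cnj c"
  by (simp add: bimat_def matrix_vector_mult_def mconj_def vconj_def axis_def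
      if_distrib if_distribR cong: if_cong)

text \<open>Testing with \<open>c = 1\<close> and \<open>c = \<i>\<close> separates an entry of \<open>C\<^sub>1\<close> from the conjugate entry of
\<open>C\<^sub>2\<close>.\<close>

lemma bimat_inject: "bimat C1 C2 = bimat D1 D2 \<longleftrightarrow> C1 = D1 \<and> C2 = D2"
proof
  assume eq: "bimat C1 C2 = bimat D1 D2"
  have "C1 $ i $ j = D1 $ i $ j \<and> C2 $ i $ j = D2 $ i $ j" for i j
  proof -
    have entry: "C1 $ i $ j * c + cnj (C2 $ i $ j) * cnj c = D1 $ i $ j * c + cnj (D2 $ i $ j) * cnj c"
      for c
      using arg_cong[OF eq, of "\<lambda>f. f (axis j c) $ i"] by (simp only: bimat_axis_component)
    have sum: "C1 $ i $ j + cnj (C2 $ i $ j) = D1 $ i $ j + cnj (D2 $ i $ j)"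
      using entry[of 1] by simp
    have "\<i> * (C1 $ i $ j - cnj (C2 $ i $ j)) = \<i> * (D1 $ i $ j - cnj (D2 $ i $ j))"
      using entry[of \<i>] by (simp add: algebra_simps)
    then have diff: "C1 $ i $ j - cnj (C2 $ i $ j) = D1 $ i $ j - cnj (D2 $ i $ j)"
      by simp
    have "C1 $ i $ j = D1 $ i $ j"
      using arg_cong2[OF sum diff, of "(+)"] by simp
    moreover have "cnj (C2 $ i $ j) = cnj (D2 $ i $ j)"
      using sum calculation by simp
    ultimately show ?thesis by simp
  qed
  then show "C1 = D1 \<and> C2 = D2" by (simp add: vec_eq_iff)
qed simp

lemma bimat_pow_int_neg:
  assumes "bimat_nonsingular A1 A2" "t < 0"
  obtains B1 B2 where "bimat A1 A2 \<circ> bimat B1 B2 = id" "bimat B1 B2 \<circ> bimat A1 A2 = id"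
    and "bimat_pow_int A1 A2 t = bimat B1 B2 ^^ nat (- t)"
proof -
  let ?inverse = "\<lambda>B. bimat A1 A2 \<circ> bimat (fst B) (snd B) = id \<and> bimat (fst B) (snd B) \<circ> bimat A1 A2 = id"
  obtain B where "?inverse B"
    using assms(1) unfolding bimat_nonsingular_def by auto
  then have "?inverse (SOME B. ?inverse B)" by (rule someI)
  with assms(2) show thesis
    by (intro that[of "fst (SOME B. ?inverse B)" "snd (SOME B. ?inverse B)"])
      (simp_all add: bimat_pow_int_def Let_def)
qed

lemma lift_mult:
  "lift A1 A2 ** lift B1 B2 = lift (A1 ** B1 + mconj A2 ** B2) (A2 ** B1 + mconj A1 ** B2)"
proof -
  have "(lift A1 A2 ** lift B1 B2) $ i $ j = lift (A1 ** B1 + mconj A2 ** B2) (A2 ** B1 + mconj A1 ** B2) $ i $ j"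
    for i j
    by (cases i; cases j) (simp_all add: lift_def matrix_matrix_mult_def sum_UNIV_Plus mconj_def
        cnj_sum add.commute)
  then show ?thesis by (simp add: vec_eq_iff)
qed

lemma lift_mat1_0: "lift (mat 1) 0 = (mat 1 :: complex^('n::finite+'n)^('n+'n))"
proof -
  have "lift (mat 1) 0 $ i $ j = (mat 1 :: complex^('n+'n)^('n+'n)) $ i $ j" for i j
    by (cases i; cases j) (simp_all add: lift_def mat_def)
  then show ?thesis by (simp add: vec_eq_iff)
qed

abbreviation block_bimat :: "complex^'n^('n+'n) \<Rightarrow> complex^'n \<Rightarrow> complex^'n" where
  "block_bimat P \<equiv> bimat (top_block P) (bot_block P)"

lemma top_block_E0: "top_block E0 = mat 1"
  by (simp add: vec_eq_iff top_block_def E0_def mat_def)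

lemma bot_block_E0: "bot_block E0 = 0"
  by (simp add: vec_eq_iff bot_block_def E0_def)

lemma top_block_add: "top_block (P + Q) = top_block P + top_block Q"
  by (simp add: top_block_def vec_eq_iff)

lemma bot_block_add: "bot_block (P + Q) = bot_block P + bot_block Q"
  by (simp add: bot_block_def vec_eq_iff)

lemma top_block_scaleR: "top_block (r *\<^sub>R P) = r *\<^sub>R top_block P"
  by (simp add: top_block_def vec_eq_iff)

lemma bot_block_scaleR: "bot_block (r *\<^sub>R P) = r *\<^sub>R bot_block P"
  by (simp add: bot_block_def vec_eq_iff)

lemma block_bimat_E0: "block_bimat E0 = id"
  by (simp add: top_block_E0 bot_block_E0 bimat_mat1_0)

lemma block_bimat_lift_mult: "block_bimat (lift A1 A2 ** P) = bimat A1 A2 \<circ> block_bimat P"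
proof -
  have "top_block (lift A1 A2 ** P) = A1 ** top_block P + mconj A2 ** bot_block P"
    "bot_block (lift A1 A2 ** P) = A2 ** top_block P + mconj A1 ** bot_block P"
    by (simp_all add: vec_eq_iff top_block_def bot_block_def lift_def matrix_matrix_mult_def
        sum_UNIV_Plus mconj_def)
  then show ?thesis by (simp add: bimat_comp_bimat)
qed

lemma block_bimat_matpow_lift: "block_bimat (matpow (lift A1 A2) k ** E0) = bimat A1 A2 ^^ k"
proof (induction k)
  case 0
  then show ?case by (simp add: block_bimat_E0)
next
  case (Suc k)
  then show ?case by (simp add: matrix_mul_assoc[symmetric] block_bimat_lift_mult)
qed

lemma lift_eq_mat1_iff_bimat_eq_id: "lift C1 C2 = mat 1 \<longleftrightarrow> bimat C1 C2 = id"
proof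
  assume "lift C1 C2 = mat 1"
  then show "bimat C1 C2 = id"
    using block_bimat_lift_mult[of C1 C2 E0] by (simp add: block_bimat_E0)
qed (simp add: bimat_mat1_0[symmetric] bimat_inject lift_mat1_0)

lemma matrix_inv_lift:
  assumes "bimat A1 A2 \<circ> bimat B1 B2 = id" "bimat B1 B2 \<circ> bimat A1 A2 = id"
  shows "matrix_inv (lift A1 A2) = lift B1 B2"
  using assms
  by (intro matrix_inv_eqI) (simp_all add: lift_mult bimat_comp_bimat lift_eq_mat1_iff_bimat_eq_id)

lemma bounded_linear_block_bimat_apply:
  "bounded_linear (\<lambda>Q::complex^('n::finite+'n)^('n+'n). block_bimat (Q ** E0) x)"
proof -
  have "linear (\<lambda>Q::complex^('n+'n)^('n+'n). block_bimat (Q ** E0) x)"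
    by (rule linearI) (simp_all add: matrix_add_rdistrib top_block_add bot_block_add bimat_add
        scalar_matrix_assoc[symmetric] top_block_scaleR bot_block_scaleR bimat_scaleR)
  then show ?thesis by (simp add: linear_conv_bounded_linear)
qed

lemma block_bimat_mat_exp_lift:
  fixes A1 A2 :: "complex^'n^'n"
  shows "block_bimat (mat_exp t (lift A1 A2) ** E0) = bimat_exp t A1 A2"
proof
  fix x :: "complex^'n"
  interpret G: bounded_linear "\<lambda>Q. block_bimat (Q ** E0) x"
    by (rule bounded_linear_block_bimat_apply)
  have "block_bimat (mat_exp t (lift A1 A2) ** E0) x
      = (\<Sum>i. block_bimat (((t ^ i / fact i) *\<^sub>R matpow (lift A1 A2) i) ** E0) x)"
    unfolding mat_exp_def by (rule G.suminf[OF summable_mat_exp_series])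
  also have "\<dots> = bimat_exp t A1 A2 x"
    by (simp only: G.scaleR block_bimat_matpow_lift bimat_exp_def)
  finally show "block_bimat (mat_exp t (lift A1 A2) ** E0) x = bimat_exp t A1 A2 x" .
qed

lemma block_bimat_matpow_int_lift:
  assumes "t \<ge> 0 \<or> bimat_nonsingular A1 A2"
  shows "block_bimat (matpow_int (lift A1 A2) t ** E0) = bimat_pow_int A1 A2 t"
proof (cases "t \<ge> 0")
  case True
  then show ?thesis by (simp add: matpow_int_def bimat_pow_int_def block_bimat_matpow_lift)
next
  case False
  with assms obtain B1 B2 where inv: "bimat A1 A2 \<circ> bimat B1 B2 = id" "bimat B1 B2 \<circ> bimat A1 A2 = id"
    and pow: "bimat_pow_int A1 A2 t = bimat B1 B2 ^^ nat (- t)"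
    by (metis bimat_pow_int_neg not_le)
  have "matpow_int (lift A1 A2) t = matpow (lift B1 B2) (nat (- t))"
    using False by (simp add: matpow_int_def matrix_inv_lift[OF inv])
  then show ?thesis by (simp add: pow block_bimat_matpow_lift)
qed

theorem lemma8:
  fixes A1 A2 :: "complex^'n^'n"
  shows "(\<forall>t::real.
            let P = mat_exp t (lift A1 A2) ** E0
            in bimat (top_block P) (bot_block P) = bimat_exp t A1 A2)
       \<and> (\<forall>t::int. (t \<ge> 0 \<or> bimat_nonsingular A1 A2) \<longrightarrow>
            (let P = matpow_int (lift A1 A2) t ** E0
             in bimat (top_block P) (bot_block P) = bimat_pow_int A1 A2 t))"
  by (simp add: Let_def block_bimat_mat_exp_lift block_bimat_matpow_int_lift)

end
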